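(* Let $r\ge 1$ and let $H$ be a multi-hypergraph in which every hyperedge has size at most $r$, let $\mathcal{M}$ be a matroid of rank $d\ge 1$ and $\gamma\colon E(H)\to E(\mathcal{M})$. Then at least one of the following holds: (1) $(H,\gamma)$ contains an independent matching of size $d$; or (2) there exist an integer $k\ge 1$ and a vertex set $U\subseteq V(H)$ with $|U|\le(2r-1)(k-1)$ such that $H-U$ contains an independent matching $M$ of size $d-k$ with $\mathrm{span}(\gamma(M))=\mathrm{span}(\gamma(E(H-U)))$.
   Context: A multi-hypergraph $H=(V,E)$ consists of a finite set $V$ and a multiset $E$ of non-empty subsets of $V$ (hyperedges); distinct copies of the same subset are distinct hyperedges and may receive different labels. For $U\subseteq V(H)$, $H-U$ has vertex set $V(H)\setminus U$ and all hyperedges of $H$ disjoint from $U$, with the labelling restricted accordingly. $\mathrm{span}$ denotes the closure operator of $\mathcal{M}$. An independent matching in $(H,\gamma)$ is a collection $M$ of pairwise vertex-disjoint hyperedges with pairwise distinct labels such that $\gamma(M)$ is independent in $\mathcal{M}$ (the empty collection qualifies). *)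

theory Defs
  imports Main
begin

definition matroid :: "'b set \<Rightarrow> ('b set \<Rightarrow> bool) \<Rightarrow> bool" where
  "matroid E indep \<longleftrightarrow> finite E \<and> indep {} \<and>
     (\<forall>X. indep X \<longrightarrow> X \<subseteq> E) \<and>
     (\<forall>X Y. indep X \<longrightarrow> Y \<subseteq> X \<longrightarrow> indep Y) \<and>
     (\<forall>X Y. indep X \<longrightarrow> indep Y \<longrightarrow> card X < card Y \<longrightarrow>
        (\<exists>y\<in>Y - X. indep (insert y X)))"

definition mrank :: "('b set \<Rightarrow> bool) \<Rightarrow> 'b set \<Rightarrow> nat" where
  "mrank indep X = Max (card ` {I. I \<subseteq> X \<and> indep I})"

definition span :: "'b set \<Rightarrow> ('b set \<Rightarrow> bool) \<Rightarrow> 'b set \<Rightarrow> 'b set" where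
  "span E indep X = {e \<in> E. mrank indep (insert e X) = mrank indep X}"

(* Parallel hyperedges are distinct identifiers with equal ends. *)
definition hypergraph :: "'a set \<Rightarrow> 'e set \<Rightarrow> ('e \<Rightarrow> 'a set) \<Rightarrow> bool" where
  "hypergraph V Ed ends \<longleftrightarrow> finite V \<and> finite Ed \<and>
     (\<forall>e\<in>Ed. ends e \<noteq> {} \<and> ends e \<subseteq> V)"

definition del_edges :: "'e set \<Rightarrow> ('e \<Rightarrow> 'a set) \<Rightarrow> 'a set \<Rightarrow> 'e set" where
  "del_edges Ed ends U = {e \<in> Ed. ends e \<inter> U = {}}"

definition indep_matching ::
  "'e set \<Rightarrow> ('e \<Rightarrow> 'a set) \<Rightarrow> ('b set \<Rightarrow> bool) \<Rightarrow> ('e \<Rightarrow> 'b) \<Rightarrow> 'e set \<Rightarrow> bool" where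
  "indep_matching Ed ends indep \<gamma> M \<longleftrightarrow> M \<subseteq> Ed \<and>
     (\<forall>e\<in>M. \<forall>f\<in>M. e \<noteq> f \<longrightarrow> ends e \<inter> ends f = {}) \<and>
     inj_on \<gamma> M \<and> indep (\<gamma> ` M)"

end

theory Submission
  imports Defs
begin

text \<open>Grow an independent matching \<open>M\<close> together with a stack of levels: each level is a
  hyperedge avoiding the vertices covered so far whose label lies outside the span of the labels
  of the still unblocked edges of \<open>M\<close>; it blocks the (nonempty) set of edges of \<open>M\<close> it meets
  and covers at most \<open>2r - 1\<close> new vertices per blocked edge.
  If every hyperedge avoiding the covered vertices has its label in the span of the unblocked
  edges, these unblocked edges are the required matching, the covered set is \<open>U\<close>, and the
  blocked edges number at most \<open>k - 1\<close>. Otherwise some hyperedge \<open>x\<close> witnesses the failure.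
  If it meets \<open>M\<close>, it becomes a new level. If not, a matroid exchange at the level where
  \<open>\<gamma> x\<close> enters the span swaps \<open>x\<close> for one blocker of that level; this either makes that
  level smaller, or empties it, and then the level hyperedge itself is pushed down to the
  earlier levels; at the bottom \<open>M\<close> grows. The pair of \<open>d - |M|\<close> and the sequence of level
  sizes (oldest first, padded by \<open>d\<close>) decreases lexicographically, so the process terminates.\<close>

locale matroid_indep =
  fixes E :: "'b set" and indep :: "'b set \<Rightarrow> bool"
  assumes matroid: "matroid E indep"
begin

abbreviation rk :: "'b set \<Rightarrow> nat" where "rk \<equiv> mrank indep"
abbreviation sp :: "'b set \<Rightarrow> 'b set" where "sp \<equiv> span E indep"

lemma finite_E: "finite E"
  using matroid unfolding matroid_def by simp

lemma indep_empty: "indep {}"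
  using matroid unfolding matroid_def by simp

lemma indep_subset_E: "indep X \<Longrightarrow> X \<subseteq> E"
  using matroid unfolding matroid_def by simp

lemma indep_subset: "indep X \<Longrightarrow> Y \<subseteq> X \<Longrightarrow> indep Y"
  using matroid unfolding matroid_def by simp

lemma indep_augment: "indep X \<Longrightarrow> indep Y \<Longrightarrow> card X < card Y \<Longrightarrow> \<exists>y\<in>Y - X. indep (insert y X)"
  using matroid unfolding matroid_def by simp

lemma indep_finite: "indep X \<Longrightarrow> finite X"
  by (rule finite_subset[OF indep_subset_E finite_E])

lemma finite_indep_subsets: "finite {I. I \<subseteq> X \<and> indep I}"
  by (rule finite_subset[of _ "Pow E"]) (use indep_subset_E finite_E in auto)

lemma rk_attained:
  obtains I where "I \<subseteq> X" "indep I" "card I = rk X"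
proof -
  have "card ` {I. I \<subseteq> X \<and> indep I} \<noteq> {}"
    using indep_empty by blast
  then have "rk X \<in> card ` {I. I \<subseteq> X \<and> indep I}"
    unfolding mrank_def by (rule Max_in[OF finite_imageI[OF finite_indep_subsets]])
  then show ?thesis using that by auto
qed

lemma card_le_rk: "I \<subseteq> X \<Longrightarrow> indep I \<Longrightarrow> card I \<le> rk X"
  unfolding mrank_def by (rule Max_ge) (use finite_indep_subsets in auto)

lemma rk_mono: "X \<subseteq> Y \<Longrightarrow> rk X \<le> rk Y"
proof -
  assume "X \<subseteq> Y"
  obtain I where "I \<subseteq> X" "indep I" "card I = rk X" by (rule rk_attained)
  then show ?thesis using card_le_rk[of I Y] \<open>X \<subseteq> Y\<close> by simp
qed

lemma rk_le_card: "finite X \<Longrightarrow> rk X \<le> card X"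
proof -
  assume "finite X"
  obtain I where "I \<subseteq> X" "card I = rk X" by (rule rk_attained)
  then show ?thesis using card_mono[OF \<open>finite X\<close>] by metis
qed

lemma rk_indep: "indep X \<Longrightarrow> rk X = card X"
  by (simp add: card_le_rk indep_finite le_antisym rk_le_card)

lemma indep_if_rk_eq_card: "finite X \<Longrightarrow> rk X = card X \<Longrightarrow> indep X"
proof -
  assume "finite X" "rk X = card X"
  obtain I where "I \<subseteq> X" "indep I" "card I = rk X" by (rule rk_attained)
  then show ?thesis using card_subset_eq[OF \<open>finite X\<close>] \<open>rk X = card X\<close> by metis
qed

lemma indep_extend_to_rk:
  "indep I \<Longrightarrow> I \<subseteq> X \<Longrightarrow> \<exists>J. I \<subseteq> J \<and> J \<subseteq> X \<and> indep J \<and> card J = rk X"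
proof (induction "rk X - card I" arbitrary: I rule: less_induct)
  case less
  show ?case
  proof (cases "card I = rk X")
    case True
    then show ?thesis using less.prems by blast
  next
    case False
    then have lt: "card I < rk X"
      using card_le_rk[OF less.prems(2,1)] by simp
    obtain K where K: "K \<subseteq> X" "indep K" "card K = rk X" by (rule rk_attained)
    then obtain y where y: "y \<in> K - I" "indep (insert y I)"
      using indep_augment[OF less.prems(1) K(2)] lt by auto
    have "card (insert y I) = Suc (card I)"
      using y(1) indep_finite[OF less.prems(1)] by simp
    then have "rk X - card (insert y I) < rk X - card I" using lt by simp
    moreover have "insert y I \<subseteq> X" using y(1) K(1) less.prems(2) by blast
    ultimately obtain J where "insert y I \<subseteq> J" "J \<subseteq> X" "indep J" "card J = rk X"
      using less.hyps[OF _ y(2)] by blast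
    then show ?thesis by blast
  qed
qed

lemma rk_submodular: "rk (X \<union> Y) + rk (X \<inter> Y) \<le> rk X + rk Y"
proof -
  obtain I where I: "I \<subseteq> X \<inter> Y" "indep I" "card I = rk (X \<inter> Y)" by (rule rk_attained)
  then obtain J where J: "I \<subseteq> J" "J \<subseteq> X \<union> Y" "indep J" "card J = rk (X \<union> Y)"
    using indep_extend_to_rk[of I "X \<union> Y"] by blast
  have fin: "finite J" using indep_finite J(3) .
  have "card J + card I \<le> card (J \<inter> X) + card (J \<inter> Y)"
  proof -
    have "(J \<inter> X) \<union> (J \<inter> Y) = J" using J(2) by blast
    then have "card (J \<inter> X) + card (J \<inter> Y) = card J + card ((J \<inter> X) \<inter> (J \<inter> Y))"
      using card_Un_Int[of "J \<inter> X" "J \<inter> Y"] fin by simp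
    moreover have "card I \<le> card ((J \<inter> X) \<inter> (J \<inter> Y))"
      using card_mono[of "(J \<inter> X) \<inter> (J \<inter> Y)" I] fin I(1) J(1) by auto
    ultimately show ?thesis by linarith
  qed
  moreover have "card (J \<inter> X) \<le> rk X" "card (J \<inter> Y) \<le> rk Y"
    using card_le_rk indep_subset[OF J(3)] by auto
  ultimately show ?thesis using I(3) J(4) by linarith
qed

lemma rk_insert_le: "rk (insert a X) \<le> Suc (rk X)"
proof -
  obtain I where I: "I \<subseteq> insert a X" "indep I" "card I = rk (insert a X)" by (rule rk_attained)
  have "I - {a} \<subseteq> X" using I(1) by blast
  then have "card (I - {a}) \<le> rk X" using indep_subset[OF I(2) Diff_subset] by (rule card_le_rk)
  moreover have "card I \<le> Suc (card (I - {a}))"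
    using card_Diff1_le[of I a] card_Suc_Diff1[of I a] indep_finite[OF I(2)]
    by (cases "a \<in> I") auto
  ultimately show ?thesis using I(3) by linarith
qed

lemma mem_sp_iff: "a \<in> sp X \<longleftrightarrow> a \<in> E \<and> rk (insert a X) = rk X"
  unfolding span_def by simp

lemma subset_sp: "X \<subseteq> E \<Longrightarrow> X \<subseteq> sp X"
  unfolding span_def by (auto simp: insert_absorb)

lemma sp_subset_E: "sp X \<subseteq> E"
  unfolding span_def by auto

lemma indep_insert_if_notin_sp:
  assumes "indep A" "a \<in> E" "a \<notin> sp A"
  shows "indep (insert a A) \<and> a \<notin> A"
proof -
  have ne: "rk (insert a A) \<noteq> rk A" using assms(2,3) mem_sp_iff by blast
  then have aA: "a \<notin> A" by (auto simp: insert_absorb)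
  have "rk A \<le> rk (insert a A)" by (rule rk_mono) (rule subset_insertI)
  then have "rk (insert a A) = card (insert a A)"
    using ne rk_insert_le[of a A] rk_indep[OF assms(1)] aA indep_finite[OF assms(1)] by simp
  then show ?thesis using indep_if_rk_eq_card indep_finite[OF assms(1)] aA by simp
qed

lemma notin_sp_if_indep_insert:
  assumes "indep (insert a A)" "a \<notin> A"
  shows "a \<notin> sp A"
proof -
  have "indep A" using indep_subset[OF assms(1)] by blast
  then have "rk (insert a A) = Suc (rk A)"
    using rk_indep assms indep_finite by simp
  then show ?thesis using mem_sp_iff by simp
qed

lemma rk_Un_if_subset_sp: "Y \<subseteq> sp X \<Longrightarrow> rk (X \<union> Y) = rk X"
proof -
  assume Y: "Y \<subseteq> sp X"
  then have "finite Y" using finite_subset[OF _ finite_E] sp_subset_E by (meson order_trans)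
  then show ?thesis using Y
  proof (induction Y rule: finite_induct)
    case empty
    then show ?case by simp
  next
    case (insert y Y)
    have IH: "rk (X \<union> Y) = rk X" using insert by blast
    have y: "rk (insert y X) = rk X" using insert.prems mem_sp_iff by blast
    have "insert y X \<union> (X \<union> Y) = X \<union> insert y Y" by blast
    then have "rk (X \<union> insert y Y) + rk (insert y X \<inter> (X \<union> Y)) \<le> rk (insert y X) + rk (X \<union> Y)"
      using rk_submodular[of "insert y X" "X \<union> Y"] by simp
    moreover have "rk X \<le> rk (insert y X \<inter> (X \<union> Y))" by (rule rk_mono) blast
    moreover have "rk X \<le> rk (X \<union> insert y Y)" by (rule rk_mono) blast
    ultimately show ?case using IH y by linarith
  qed
qed

lemma sp_mono: "X \<subseteq> Y \<Longrightarrow> sp X \<subseteq> sp Y"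
proof
  fix e assume XY: "X \<subseteq> Y" and e: "e \<in> sp X"
  then have eE: "e \<in> E" and eX: "rk (insert e X) = rk X" using mem_sp_iff by auto
  have "insert e X \<union> Y = insert e Y" using XY by blast
  then have "rk (insert e Y) + rk (insert e X \<inter> Y) \<le> rk (insert e X) + rk Y"
    using rk_submodular[of "insert e X" Y] by simp
  moreover have "rk X \<le> rk (insert e X \<inter> Y)" by (rule rk_mono) (use XY in blast)
  moreover have "rk Y \<le> rk (insert e Y)" by (rule rk_mono) blast
  ultimately have "rk (insert e Y) = rk Y" using eX by linarith
  then show "e \<in> sp Y" using eE mem_sp_iff by blast
qed

lemma sp_subset_sp: "X \<subseteq> sp Y \<Longrightarrow> sp X \<subseteq> sp Y"
proof
  fix e assume XY: "X \<subseteq> sp Y" and e: "e \<in> sp X"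
  have "X \<subseteq> sp (insert e Y)" using XY sp_mono[of Y "insert e Y"] by blast
  then have "rk (insert e Y) = rk (insert e Y \<union> X)" by (rule rk_Un_if_subset_sp[symmetric])
  also have "\<dots> = rk (insert e (X \<union> Y))" by (simp add: Un_commute)
  also have "\<dots> = rk (X \<union> Y)"
    using sp_mono[of X "X \<union> Y"] e mem_sp_iff by blast
  also have "\<dots> = rk Y" using rk_Un_if_subset_sp[OF XY] by (simp add: Un_commute)
  finally show "e \<in> sp Y" using e mem_sp_iff by blast
qed

lemma sp_eqI: "X \<subseteq> sp Y \<Longrightarrow> Y \<subseteq> sp X \<Longrightarrow> sp X = sp Y"
  using sp_subset_sp by blast

lemma sp_Int_if_indep_Un:
  assumes "indep (P \<union> Q)" "y \<in> sp P" "y \<in> sp Q"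
  shows "y \<in> sp (P \<inter> Q)"
proof -
  have indep: "indep P" "indep Q" "indep (P \<inter> Q)"
    by (rule indep_subset[OF assms(1)]; blast)+
  have "card (P \<union> Q) + rk (insert y (P \<inter> Q)) \<le> rk (insert y P \<union> insert y Q) + rk (insert y P \<inter> insert y Q)"
    using rk_indep[OF assms(1)] rk_mono[of "P \<union> Q" "insert y P \<union> insert y Q"] by auto
  also have "\<dots> \<le> rk (insert y P) + rk (insert y Q)" by (rule rk_submodular)
  also have "\<dots> = card P + card Q"
    using assms(2,3) indep by (simp add: mem_sp_iff rk_indep)
  also have "\<dots> = card (P \<union> Q) + card (P \<inter> Q)"
    using card_Un_Int[OF indep_finite[OF indep(1)] indep_finite[OF indep(2)]] by simp
  finally have "rk (insert y (P \<inter> Q)) \<le> rk (P \<inter> Q)" using rk_indep[OF indep(3)] by simp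
  moreover have "rk (P \<inter> Q) \<le> rk (insert y (P \<inter> Q))" by (rule rk_mono) auto
  ultimately show ?thesis using assms(2) mem_sp_iff by simp
qed

text \<open>If \<open>y\<close> lies in the span of an independent set \<open>A\<close> but not in the span of \<open>S \<subseteq> A\<close>,
  then removing a single suitable element of \<open>A - S\<close> already loses \<open>y\<close>; otherwise
  intersecting the spans of all the sets \<open>A - {b}\<close> would put \<open>y\<close> into the span of \<open>S\<close>.\<close>
lemma exists_notin_sp_remove:
  assumes A: "indep A" "S \<subseteq> A" "y \<in> sp A" "y \<notin> sp S"
  shows "\<exists>b\<in>A - S. y \<notin> sp (A - {b})"
proof (rule ccontr)
  assume "\<not> (\<exists>b\<in>A - S. y \<notin> sp (A - {b}))"
  then have all: "\<And>b. b \<in> A - S \<Longrightarrow> y \<in> sp (A - {b})" by blast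
  have removed: "y \<in> sp (A - R)" if "finite R" "R \<subseteq> A - S" for R
    using that
  proof (induction R rule: finite_subset_induct)
    case empty
    show ?case using A(3) by simp
  next
    case (insert b R)
    have "indep ((A - R) \<union> (A - {b}))"
      by (rule indep_subset[OF A(1)]) blast
    moreover note insert.IH
    moreover have "y \<in> sp (A - {b})" using all insert.hyps(2) .
    ultimately have "y \<in> sp ((A - R) \<inter> (A - {b}))" by (rule sp_Int_if_indep_Un)
    moreover have "(A - R) \<inter> (A - {b}) = A - insert b R" by blast
    ultimately show ?case by (simp only:)
  qed
  have "A - (A - S) = S" using A(2) by blast
  then show False using removed[of "A - S"] indep_finite[OF A(1)] A(4) by simp
qed

lemma mem_sp_exchange:
  assumes "indep A" "b \<in> A" "y \<in> sp A" "y \<notin> sp (A - {b})"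
  shows "b \<in> sp (insert y (A - {b}))"
proof -
  have yE: "y \<in> E" using assms(3) sp_subset_E by blast
  have bE: "b \<in> E" using assms(1,2) indep_subset_E by blast
  have "indep (A - {b})" using indep_subset[OF assms(1)] by blast
  then have ind: "indep (insert y (A - {b}))" "y \<notin> A - {b}"
    using indep_insert_if_notin_sp[OF _ yE assms(4)] by blast+
  have "insert b (insert y (A - {b})) = insert y A" using assms(2) by blast
  moreover have "rk (insert y A) = card A"
    using assms(3) rk_indep[OF assms(1)] unfolding mem_sp_iff by simp
  ultimately have "rk (insert b (insert y (A - {b}))) = card A" by (simp only:)
  moreover have "rk (insert y (A - {b})) = card A"
    using rk_indep[OF ind(1)] ind(2) card_Suc_Diff1[OF indep_finite[OF assms(1)] assms(2)]
      indep_finite[OF assms(1)] by simp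
  ultimately have "rk (insert b (insert y (A - {b}))) = rk (insert y (A - {b}))" by simp
  then show ?thesis using bE mem_sp_iff by blast
qed

lemma sp_exchange:
  assumes "indep A" "b \<in> A" "y \<in> sp A" "y \<notin> sp (A - {b})" "A \<subseteq> A'" "A' \<subseteq> E"
  shows "sp (insert y (A' - {b})) = sp A'"
proof (rule sp_eqI)
  show "insert y (A' - {b}) \<subseteq> sp A'"
    using sp_mono[OF assms(5)] assms(3) subset_sp[OF assms(6)] by blast
  have yE: "y \<in> E" using assms(3) sp_subset_E by blast
  have "insert y (A - {b}) \<subseteq> insert y (A' - {b})" using assms(5) by blast
  then have "b \<in> sp (insert y (A' - {b}))"
    using mem_sp_exchange[OF assms(1-4)] sp_mono by blast
  moreover have "insert y (A' - {b}) \<subseteq> sp (insert y (A' - {b}))"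
    by (rule subset_sp) (use yE assms(6) in blast)
  ultimately show "A' \<subseteq> sp (insert y (A' - {b}))" by blast
qed

lemma indep_exchange:
  assumes "indep A'" "A \<subseteq> A'" "b \<in> A" "y \<in> sp A" "y \<notin> sp (A - {b})"
  shows "y \<notin> A' - {b} \<and> indep (insert y (A' - {b}))"
proof -
  have A: "indep A" using indep_subset assms(1,2) by blast
  have yE: "y \<in> E" using assms(4) sp_subset_E by blast
  have y_notin: "y \<notin> A' - {b}"
  proof
    assume y: "y \<in> A' - {b}"
    have "indep (A - {b})" using indep_subset[OF A] by blast
    then have "y \<notin> A - {b}" using indep_insert_if_notin_sp[OF _ yE assms(5)] by blast
    then have "y \<notin> A" using y by blast
    moreover have "indep (insert y A)"
      by (rule indep_subset[OF assms(1)]) (use y assms(2) in blast)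
    ultimately show False using notin_sp_if_indep_insert assms(4) by blast
  qed
  have A'E: "A' \<subseteq> E" using indep_subset_E assms(1) .
  have fin: "finite (insert y (A' - {b}))" using indep_finite[OF assms(1)] by simp
  have "b \<in> A'" using assms(2,3) by blast
  then have card_eq: "card (insert y (A' - {b})) = card A'"
    using y_notin card_Suc_Diff1[OF indep_finite[OF assms(1)]] indep_finite[OF assms(1)] by simp
  have "A' \<subseteq> sp (insert y (A' - {b}))"
    using sp_exchange[OF A assms(3-5,2) A'E] subset_sp[OF A'E] by simp
  then have "rk (insert y (A' - {b}) \<union> A') = rk (insert y (A' - {b}))"
    by (rule rk_Un_if_subset_sp)
  moreover have "rk A' \<le> rk (insert y (A' - {b}) \<union> A')" by (rule rk_mono) blast
  ultimately have "rk A' \<le> rk (insert y (A' - {b}))" by simp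
  then have "rk (insert y (A' - {b})) = card (insert y (A' - {b}))"
    using rk_le_card[OF fin] card_eq rk_indep[OF assms(1)] by simp
  then show ?thesis using y_notin indep_if_rk_eq_card[OF fin] by blast
qed

end

text \<open>Level sizes are stored newest first; \<open>padded\<close> puts the oldest first and pads with \<open>D\<close>,
  which exceeds every level size, so that pushing a new level is a lexicographic decrease.\<close>
definition padded :: "nat \<Rightarrow> nat list \<Rightarrow> nat list" where
  "padded D cs = rev cs @ replicate (D - length cs) D"

definition suffix_decrease :: "nat list \<Rightarrow> nat list \<Rightarrow> bool" where
  "suffix_decrease xs ys \<longleftrightarrow> (\<exists>zs a b ws. xs = a # ws \<and> ys = zs @ b # ws \<and> a < b)"

lemma suffix_decrease_Cons: "suffix_decrease xs ys \<Longrightarrow> suffix_decrease xs (y # ys)"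
  unfolding suffix_decrease_def by (metis append_Cons)

lemma padded_Cons_less:
  assumes "length cs < D" "c < D"
  shows "(padded D (c # cs), padded D cs) \<in> lex less_than"
proof -
  let ?tail = "replicate (D - Suc (length cs)) D"
  have "padded D (c # cs) = rev cs @ c # ?tail" unfolding padded_def by simp
  moreover have "padded D cs = rev cs @ D # ?tail"
    unfolding padded_def using assms(1) by (simp add: Suc_diff_Suc[symmetric])
  ultimately show ?thesis unfolding lex_conv using assms(2) by auto
qed

lemma padded_less_if_suffix_decrease:
  assumes "suffix_decrease xs ys" "length ys \<le> D"
  shows "(padded D xs, padded D ys) \<in> lex less_than"
proof -
  obtain zs a b ws where xs: "xs = a # ws" and ys: "ys = zs @ b # ws" and "a < b"
    using assms(1) unfolding suffix_decrease_def by blast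
  have "padded D xs = rev ws @ a # replicate (D - length xs) D"
    "padded D ys = rev ws @ b # rev zs @ replicate (D - length ys) D"
    unfolding padded_def xs ys by simp_all
  moreover have "length (padded D xs) = length (padded D ys)"
    using assms(2) unfolding padded_def xs ys by simp
  ultimately show ?thesis unfolding lex_conv using \<open>a < b\<close> by auto
qed

lemma indep_matching_mono_edges:
  "indep_matching Ed ends indep \<gamma> N \<Longrightarrow> N \<subseteq> Ed' \<Longrightarrow> indep_matching Ed' ends indep \<gamma> N"
  unfolding indep_matching_def by blast

locale labelled_hypergraph = matroid_indep E indep for E :: "'b set" and indep +
  fixes V :: "'a set" and Ed :: "'e set" and ends :: "'e \<Rightarrow> 'a set" and \<gamma> :: "'e \<Rightarrow> 'b"
    and r :: nat
  assumes hypergraph_H: "hypergraph V Ed ends"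
    and card_ends_le: "\<forall>e\<in>Ed. card (ends e) \<le> r"
    and labels_in_E: "\<forall>e\<in>Ed. \<gamma> e \<in> E"
begin

abbreviation imatch :: "'e set \<Rightarrow> bool" where
  "imatch \<equiv> indep_matching Ed ends indep \<gamma>"

lemma finite_Ed: "finite Ed"
  using hypergraph_H unfolding hypergraph_def by simp

lemma ends_nonempty: "e \<in> Ed \<Longrightarrow> ends e \<noteq> {}"
  using hypergraph_H unfolding hypergraph_def by simp

lemma ends_subset_V: "e \<in> Ed \<Longrightarrow> ends e \<subseteq> V"
  using hypergraph_H unfolding hypergraph_def by simp

lemma finite_ends: "e \<in> Ed \<Longrightarrow> finite (ends e)"
  using hypergraph_H ends_subset_V unfolding hypergraph_def by (meson finite_subset)

lemma imatch_subset_Ed: "imatch M \<Longrightarrow> M \<subseteq> Ed"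
  unfolding indep_matching_def by simp

lemma imatch_disjoint: "imatch M \<Longrightarrow> e \<in> M \<Longrightarrow> f \<in> M \<Longrightarrow> e \<noteq> f \<Longrightarrow> ends e \<inter> ends f = {}"
  unfolding indep_matching_def by blast

lemma imatch_finite: "imatch M \<Longrightarrow> finite M"
  using imatch_subset_Ed finite_Ed by (rule finite_subset)

lemma imatch_subset: "imatch M \<Longrightarrow> N \<subseteq> M \<Longrightarrow> imatch N"
  unfolding indep_matching_def
  by (metis (no_types, lifting) image_mono inj_on_subset indep_subset order_trans subsetD)

lemma imatch_insert:
  assumes "imatch N" "x \<in> Ed" "\<forall>f\<in>N. ends f \<inter> ends x = {}"
    and "\<gamma> x \<notin> \<gamma> ` N" "indep (insert (\<gamma> x) (\<gamma> ` N))"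
  shows "imatch (insert x N)"
  unfolding indep_matching_def
proof (intro conjI)
  show "insert x N \<subseteq> Ed" using assms(1,2) imatch_subset_Ed by blast
  show "\<forall>e\<in>insert x N. \<forall>f\<in>insert x N. e \<noteq> f \<longrightarrow> ends e \<inter> ends f = {}"
    using assms(3) imatch_disjoint[OF assms(1)] by blast
  show "inj_on \<gamma> (insert x N)"
    using assms(1,4) unfolding indep_matching_def by auto
  show "indep (\<gamma> ` insert x N)" using assms(5) by simp
qed

definition blockers :: "'e set \<Rightarrow> 'e set \<Rightarrow> 'e \<Rightarrow> 'e set" where
  "blockers M T x = {f \<in> M - T. ends f \<inter> ends x \<noteq> {}}"

text \<open>A stack of levels is a list of hyperedges, newest first; \<open>blocked\<close> and \<open>covered\<close> are the
  matching edges and the vertices absorbed by it.\<close>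
fun blocked :: "'e set \<Rightarrow> 'e list \<Rightarrow> 'e set" where
  "blocked M [] = {}"
| "blocked M (x # xs) = blocked M xs \<union> blockers M (blocked M xs) x"

fun covered :: "'e set \<Rightarrow> 'e list \<Rightarrow> 'a set" where
  "covered M [] = {}"
| "covered M (x # xs) = covered M xs \<union> ends x \<union> \<Union>(ends ` blockers M (blocked M xs) x)"

fun level_sizes :: "'e set \<Rightarrow> 'e list \<Rightarrow> nat list" where
  "level_sizes M [] = []"
| "level_sizes M (x # xs) = card (blockers M (blocked M xs) x) # level_sizes M xs"

fun valid_levels :: "'e set \<Rightarrow> 'e list \<Rightarrow> bool" where
  "valid_levels M [] = True"
| "valid_levels M (x # xs) \<longleftrightarrow> valid_levels M xs \<and> x \<in> Ed \<and> ends x \<inter> covered M xs = {} \<and>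
     \<gamma> x \<notin> sp (\<gamma> ` (M - blocked M xs)) \<and> blockers M (blocked M xs) x \<noteq> {}"

lemma blockers_subset: "blockers M T x \<subseteq> M - T"
  unfolding blockers_def by blast

lemma blocked_subset: "blocked M xs \<subseteq> M"
  by (induction xs) (auto simp: blockers_def)

lemma ends_subset_covered_if_blocked: "f \<in> blocked M xs \<Longrightarrow> ends f \<subseteq> covered M xs"
  by (induction xs) auto

lemma ends_subset_covered_if_level: "x \<in> set xs \<Longrightarrow> ends x \<subseteq> covered M xs"
  by (induction xs) auto

lemma length_level_sizes [simp]: "length (level_sizes M xs) = length xs"
  by (induction xs) auto

lemma unblocked_avoids_covered:
  "imatch M \<Longrightarrow> f \<in> M - blocked M xs \<Longrightarrow> ends f \<inter> covered M xs = {}"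
proof (induction xs)
  case Nil
  then show ?case by simp
next
  case (Cons x xs)
  have f: "f \<in> M - blocked M xs" "f \<notin> blockers M (blocked M xs) x"
    using Cons.prems(2) by auto
  have "ends f \<inter> covered M xs = {}" using Cons.IH Cons.prems(1) f(1) .
  moreover have "ends f \<inter> ends x = {}" using f unfolding blockers_def by blast
  moreover have "ends f \<inter> ends g = {}" if g: "g \<in> blockers M (blocked M xs) x" for g
  proof -
    have "g \<in> M" "g \<noteq> f" using g f(2) blockers_subset by auto
    then show ?thesis using imatch_disjoint[OF Cons.prems(1)] f(1) by blast
  qed
  ultimately show ?case by auto
qed

lemma avoids_matching_if_no_blockers:
  assumes "ends x \<inter> covered M xs = {}" "blockers M (blocked M xs) x = {}" "f \<in> M"
  shows "ends f \<inter> ends x = {}"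
proof (cases "f \<in> blocked M xs")
  case True
  then show ?thesis using ends_subset_covered_if_blocked assms(1) by blast
next
  case False
  then show ?thesis using assms(2,3) unfolding blockers_def by blast
qed

lemma covered_subset_V: "valid_levels M xs \<Longrightarrow> M \<subseteq> Ed \<Longrightarrow> covered M xs \<subseteq> V"
proof (induction xs)
  case Nil
  then show ?case by simp
next
  case (Cons x xs)
  have "blockers M (blocked M xs) x \<subseteq> Ed" using blockers_subset Cons.prems(2) by blast
  then have "\<Union>(ends ` blockers M (blocked M xs) x) \<subseteq> V" using ends_subset_V by blast
  moreover have "ends x \<subseteq> V" "covered M xs \<subseteq> V" using Cons ends_subset_V by simp_all
  ultimately show ?case by simp
qed

text \<open>Each blocker meets \<open>x\<close>, so it contributes at most \<open>r - 1\<close> new vertices, while \<open>x\<close>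
  itself contributes at most \<open>r\<close>.\<close>
lemma card_ends_Un_blockers_le:
  assumes x: "x \<in> Ed" and B: "B \<subseteq> Ed" "finite B" "B \<noteq> {}"
    and meets: "\<forall>f\<in>B. ends f \<inter> ends x \<noteq> {}"
  shows "card (ends x \<union> \<Union>(ends ` B)) \<le> (2*r - 1) * card B"
proof -
  have fewer: "card (ends f - ends x) \<le> r - 1" if f: "f \<in> B" for f
  proof -
    have "f \<in> Ed" using f B(1) by blast
    have "ends f - ends x \<subset> ends f" using meets f by blast
    then have "card (ends f - ends x) < card (ends f)"
      by (rule psubset_card_mono[OF finite_ends[OF \<open>f \<in> Ed\<close>]])
    then show ?thesis using card_ends_le \<open>f \<in> Ed\<close> by fastforce
  qed
  have r_pos: "1 \<le> r"
    using card_ends_le x card_gt_0_iff[of "ends x"] ends_nonempty[OF x] finite_ends[OF x] by fastforce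
  have "ends x \<union> \<Union>(ends ` B) = ends x \<union> (\<Union>f\<in>B. ends f - ends x)" by blast
  then have "card (ends x \<union> \<Union>(ends ` B)) \<le> card (ends x) + card (\<Union>f\<in>B. ends f - ends x)"
    by (metis card_Un_le)
  also have "\<dots> \<le> card (ends x) + (\<Sum>f\<in>B. card (ends f - ends x))"
    using card_UN_le[OF B(2), of "\<lambda>f. ends f - ends x"] by (rule add_left_mono)
  also have "\<dots> \<le> r + (\<Sum>f\<in>B. r - 1)"
    using card_ends_le x sum_mono[of B "\<lambda>f. card (ends f - ends x)" "\<lambda>_. r - 1"] fewer
    by (simp add: add_mono)
  also have "\<dots> \<le> r * card B + (r - 1) * card B"
    using B(2,3) by (simp add: Suc_leI card_gt_0_iff)
  also have "\<dots> = (2*r - 1) * card B"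
    using r_pos by (simp add: algebra_simps)
  finally show ?thesis .
qed

lemma card_blocked_Cons:
  assumes "finite M"
  shows "card (blocked M (x # xs)) = card (blocked M xs) + card (blockers M (blocked M xs) x)"
proof -
  have "finite (blocked M xs)" "finite (blockers M (blocked M xs) x)"
    using assms blocked_subset[of M xs] blockers_subset[of M "blocked M xs" x]
    by (auto intro: finite_subset)
  moreover have "blocked M xs \<inter> blockers M (blocked M xs) x = {}"
    using blockers_subset by blast
  ultimately show ?thesis by (simp add: card_Un_disjoint)
qed

lemma card_covered_le:
  "valid_levels M xs \<Longrightarrow> imatch M \<Longrightarrow> card (covered M xs) \<le> (2*r - 1) * card (blocked M xs)"
proof (induction xs)
  case Nil
  then show ?case by simp
next
  case (Cons x xs)
  let ?B = "blockers M (blocked M xs) x"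
  have "?B \<subseteq> M" using blockers_subset by blast
  then have B: "?B \<subseteq> Ed" "finite ?B"
    using imatch_subset_Ed[OF Cons.prems(2)] imatch_finite[OF Cons.prems(2)]
    by (auto intro: finite_subset)
  have x: "x \<in> Ed" "?B \<noteq> {}" and IH: "card (covered M xs) \<le> (2*r - 1) * card (blocked M xs)"
    using Cons by auto
  have meets: "\<forall>f\<in>?B. ends f \<inter> ends x \<noteq> {}" unfolding blockers_def by blast
  have "card (covered M (x # xs)) \<le> card (covered M xs) + card (ends x \<union> \<Union>(ends ` ?B))"
    using card_Un_le[of "covered M xs" "ends x \<union> \<Union>(ends ` ?B)"] by (simp add: Un_assoc)
  also have "\<dots> \<le> (2*r - 1) * card (blocked M xs) + (2*r - 1) * card ?B"
    using IH card_ends_Un_blockers_le[OF x(1) B x(2) meets] by (rule add_mono)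
  also have "\<dots> = (2*r - 1) * card (blocked M (x # xs))"
    using card_blocked_Cons[OF imatch_finite[OF Cons.prems(2)]] by (simp add: algebra_simps)
  finally show ?case .
qed

lemma length_le_card_blocked: "valid_levels M xs \<Longrightarrow> finite M \<Longrightarrow> length xs \<le> card (blocked M xs)"
proof (induction xs)
  case Nil
  then show ?case by simp
next
  case (Cons x xs)
  have "blockers M (blocked M xs) x \<subseteq> M" using blockers_subset by blast
  then have "finite (blockers M (blocked M xs) x)" using Cons.prems(2) by (rule finite_subset)
  then have "card (blockers M (blocked M xs) x) \<ge> 1"
    using Cons.prems(1) by (simp add: Suc_leI card_gt_0_iff)
  then show ?case using Cons card_blocked_Cons by simp
qed

lemma blocked_levels_cong:
  assumes "\<forall>w\<in>set xs. \<forall>f. ends f \<inter> ends w \<noteq> {} \<longrightarrow> (f \<in> M' \<longleftrightarrow> f \<in> M)"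
  shows "blocked M' xs = blocked M xs \<and> covered M' xs = covered M xs \<and>
    level_sizes M' xs = level_sizes M xs"
  using assms
proof (induction xs)
  case Nil
  then show ?case by simp
next
  case (Cons x xs)
  then have "blocked M' xs = blocked M xs" "covered M' xs = covered M xs"
    "level_sizes M' xs = level_sizes M xs" by simp_all
  moreover have "blockers M' (blocked M xs) x = blockers M (blocked M xs) x"
    using Cons.prems unfolding blockers_def by auto
  ultimately show ?case by simp
qed

lemma valid_levels_cong:
  assumes "valid_levels M xs"
    and "\<forall>w\<in>set xs. \<forall>f. ends f \<inter> ends w \<noteq> {} \<longrightarrow> (f \<in> M' \<longleftrightarrow> f \<in> M)"
    and "\<forall>T\<subseteq>blocked M xs. sp (\<gamma> ` (M' - T)) = sp (\<gamma> ` (M - T))"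
  shows "valid_levels M' xs"
  using assms
proof (induction xs)
  case Nil
  then show ?case by simp
next
  case (Cons x xs)
  have "blocked M xs \<subseteq> blocked M (x # xs)" by simp
  then have "valid_levels M' xs" using Cons by (meson list.set_intros(2) order_trans valid_levels.simps(2))
  moreover have "blocked M' xs = blocked M xs" "covered M' xs = covered M xs"
    using blocked_levels_cong Cons.prems(2) by simp_all
  moreover have "blockers M' (blocked M xs) x = blockers M (blocked M xs) x"
    using Cons.prems(2) unfolding blockers_def by auto
  moreover have "sp (\<gamma> ` (M' - blocked M xs)) = sp (\<gamma> ` (M - blocked M xs))"
    using Cons.prems(3) by auto
  ultimately show ?case using Cons.prems(1) by simp
qed

lemma exchange_agrees_on_levels:
  assumes "ends x \<inter> covered M xs = {}" "ends e \<inter> covered M xs = {}"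
  shows "\<forall>w\<in>set xs. \<forall>f. ends f \<inter> ends w \<noteq> {} \<longrightarrow> (f \<in> insert x (M - {e}) \<longleftrightarrow> f \<in> M)"
  using assms ends_subset_covered_if_level by blast

text \<open>The matroid exchange behind the augmentation: \<open>\<gamma> x\<close> enters the span when the
  blockers of level \<open>z\<close> are added back, so it can replace the label of one of them.\<close>
lemma exchange_blocker:
  assumes M: "imatch M" and x: "x \<in> Ed" "\<forall>f\<in>M. ends f \<inter> ends x = {}"
    and in_sp: "\<gamma> x \<in> sp (\<gamma> ` (M - blocked M xs))"
    and notin_sp: "\<gamma> x \<notin> sp (\<gamma> ` (M - blocked M (z # xs)))"
  obtains e where "e \<in> blockers M (blocked M xs) z" "imatch (insert x (M - {e}))"
    "\<And>T. T \<subseteq> blocked M xs \<Longrightarrow> sp (\<gamma> ` (insert x (M - {e}) - T)) = sp (\<gamma> ` (M - T))"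
proof -
  let ?A = "\<gamma> ` (M - blocked M xs)"
  have indep_M: "indep (\<gamma> ` M)" and inj: "inj_on \<gamma> M"
    using M unfolding indep_matching_def by simp_all
  have A_sub: "?A \<subseteq> \<gamma> ` M" by (rule image_mono) blast
  note A = indep_subset[OF indep_M A_sub] A_sub
  have "\<gamma> ` (M - blocked M (z # xs)) \<subseteq> ?A" by auto
  then obtain b where b: "b \<in> ?A - \<gamma> ` (M - blocked M (z # xs))" "\<gamma> x \<notin> sp (?A - {b})"
    using exists_notin_sp_remove[OF A(1) _ in_sp notin_sp] by blast
  then obtain e where e: "e \<in> M - blocked M xs" "b = \<gamma> e" by blast
  have e_blocker: "e \<in> blockers M (blocked M xs) z" using b(1) e by auto
  have "x \<notin> M" using x ends_nonempty by blast
  have img: "\<gamma> ` (M - T - {e}) = \<gamma> ` (M - T) - {b}" if "T \<subseteq> blocked M xs" for T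
    using inj_on_image_set_diff[OF inj, of "M - T" "{e}"] that e by auto
  have img_insert: "\<gamma> ` (insert x (M - {e}) - T) = insert (\<gamma> x) (\<gamma> ` (M - T) - {b})"
    if "T \<subseteq> blocked M xs" for T
  proof -
    have "insert x (M - {e}) - T = insert x (M - T - {e})"
      using \<open>x \<notin> M\<close> that blocked_subset by blast
    then show ?thesis using img[OF that] by simp
  qed
  have exch: "\<gamma> x \<notin> \<gamma> ` M - {b}" "indep (insert (\<gamma> x) (\<gamma> ` M - {b}))"
    using indep_exchange[OF indep_M A(2) _ in_sp b(2)] b(1) by blast+
  show ?thesis
  proof (rule that[OF e_blocker])
    show "imatch (insert x (M - {e}))"
      using imatch_insert[OF imatch_subset[OF M] x(1)] x(2) exch img[of "{}"] by simp
  next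
    fix T assume T: "T \<subseteq> blocked M xs"
    have "?A \<subseteq> \<gamma> ` (M - T)" "\<gamma> ` (M - T) \<subseteq> E"
      using T labels_in_E imatch_subset_Ed[OF M] by blast+
    then show "sp (\<gamma> ` (insert x (M - {e}) - T)) = sp (\<gamma> ` (M - T))"
      using sp_exchange[OF A(1) _ in_sp b(2)] b(1) img_insert[OF T] by simp
  qed
qed

lemma exchange_shrinks_level:
  assumes valid: "valid_levels M (z # xs)" and M: "imatch M"
    and x: "x \<in> Ed" "\<forall>f\<in>M. ends f \<inter> ends x = {}" "ends x \<inter> covered M (z # xs) = {}"
    and in_sp: "\<gamma> x \<in> sp (\<gamma> ` (M - blocked M xs))"
    and notin_sp: "\<gamma> x \<notin> sp (\<gamma> ` (M - blocked M (z # xs)))"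
  obtains M' where "imatch M'" "card M' = card M" "valid_levels M' xs"
    "blocked M' xs = blocked M xs" "covered M' xs = covered M xs"
    "level_sizes M' xs = level_sizes M xs"
    "card (blockers M' (blocked M xs) z) < card (blockers M (blocked M xs) z)"
    "\<gamma> z \<notin> sp (\<gamma> ` (M' - blocked M xs))"
proof -
  let ?T = "blocked M xs" and ?B = "blockers M (blocked M xs) z"
  obtain e where e: "e \<in> ?B" and M': "imatch (insert x (M - {e}))"
    and sp_eq: "\<And>T. T \<subseteq> ?T \<Longrightarrow> sp (\<gamma> ` (insert x (M - {e}) - T)) = sp (\<gamma> ` (M - T))"
    using exchange_blocker[OF M x(1,2) in_sp notin_sp] by blast
  define M' where "M' = insert x (M - {e})"
  have "ends e \<inter> covered M xs = {}"
    using unblocked_avoids_covered[OF M] e blockers_subset by blast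
  moreover have "ends x \<inter> covered M xs = {}" using x(3) by auto
  ultimately have agree: "\<forall>w\<in>set xs. \<forall>f. ends f \<inter> ends w \<noteq> {} \<longrightarrow> (f \<in> M' \<longleftrightarrow> f \<in> M)"
    unfolding M'_def by (rule exchange_agrees_on_levels[rotated])
  have "x \<notin> M" using x(2) ends_nonempty[OF x(1)] by blast
  moreover have "e \<in> M" using e blockers_subset by blast
  ultimately have "card M' = card M"
    unfolding M'_def using imatch_finite[OF M] card_Suc_Diff1[OF imatch_finite[OF M]] by simp
  moreover have "valid_levels M' xs"
    using valid_levels_cong[OF _ agree] valid sp_eq unfolding M'_def by simp
  moreover have "blockers M' ?T z = ?B - {e}"
    unfolding M'_def blockers_def using x(3) by auto
  then have "card (blockers M' ?T z) < card ?B"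
    using e imatch_finite[OF M] blockers_subset
    by (metis card_Diff1_less finite_Diff finite_subset)
  moreover have "\<gamma> z \<notin> sp (\<gamma> ` (M' - ?T))" using sp_eq valid unfolding M'_def by simp
  ultimately show ?thesis
    using that M' blocked_levels_cong[OF agree] unfolding M'_def by blast
qed

lemma augment_or_improve:
  assumes "valid_levels M xs" "imatch M" "x \<in> Ed" "\<forall>f\<in>M. ends f \<inter> ends x = {}"
    and "ends x \<inter> covered M xs = {}" "\<gamma> x \<notin> sp (\<gamma> ` (M - blocked M xs))"
  shows "(\<exists>M'. imatch M' \<and> card M' = Suc (card M)) \<or>
    (\<exists>M' xs'. imatch M' \<and> card M' = card M \<and> valid_levels M' xs' \<and>
       suffix_decrease (level_sizes M' xs') (level_sizes M xs))"
  using assms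
proof (induction xs arbitrary: M x)
  case Nil
  have "\<gamma> x \<in> E" using Nil.prems(3) labels_in_E by blast
  moreover have "indep (\<gamma> ` M)" using Nil.prems(2) unfolding indep_matching_def by simp
  ultimately have "indep (insert (\<gamma> x) (\<gamma> ` M))" "\<gamma> x \<notin> \<gamma> ` M"
    using indep_insert_if_notin_sp Nil.prems(6) by simp_all
  then have "imatch (insert x M)" using imatch_insert Nil.prems(2-4) by blast
  moreover have "x \<notin> M" using Nil.prems(3,4) ends_nonempty by blast
  ultimately show ?case using imatch_finite[OF Nil.prems(2)] by auto
next
  case (Cons z xs)
  let ?T = "blocked M xs"
  have z: "valid_levels M xs" "z \<in> Ed" "ends z \<inter> covered M xs = {}"
    using Cons.prems(1) by simp_all
  show ?case
  proof (cases "\<gamma> x \<in> sp (\<gamma> ` (M - ?T))")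
    case False
    have "ends x \<inter> covered M xs = {}" using Cons.prems(5) by auto
    then show ?thesis unfolding level_sizes.simps(2)
      using Cons.IH[OF z(1) Cons.prems(2-4) _ False] by (blast intro: suffix_decrease_Cons)
  next
    case True
    obtain M' where M': "imatch M'" "card M' = card M" "valid_levels M' xs"
      and same: "blocked M' xs = ?T" "covered M' xs = covered M xs"
        "level_sizes M' xs = level_sizes M xs"
      and shrinks: "card (blockers M' ?T z) < card (blockers M ?T z)"
      and z_notin: "\<gamma> z \<notin> sp (\<gamma> ` (M' - ?T))"
      using exchange_shrinks_level[OF Cons.prems(1-5) True Cons.prems(6)] by blast
    show ?thesis
    proof (cases "blockers M' ?T z = {}")
      case False
      then have "valid_levels M' (z # xs)" using M'(3) z same z_notin by simp
      moreover have "suffix_decrease (level_sizes M' (z # xs)) (level_sizes M (z # xs))"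
        unfolding suffix_decrease_def using same shrinks by (auto intro!: exI[of _ "[]"])
      ultimately show ?thesis using M'(1,2) by blast
    next
      case True
      then have "\<forall>f\<in>M'. ends f \<inter> ends z = {}"
        using avoids_matching_if_no_blockers[of z M' xs] z(3) same by simp
      then have "(\<exists>M''. imatch M'' \<and> card M'' = Suc (card M')) \<or>
        (\<exists>M'' xs'. imatch M'' \<and> card M'' = card M' \<and> valid_levels M'' xs' \<and>
           suffix_decrease (level_sizes M'' xs') (level_sizes M' xs))"
        using Cons.IH[OF M'(3,1) z(2)] z(3) z_notin same by simp
      then show ?thesis unfolding level_sizes.simps(2) M'(2) same(3)
        by (blast intro: suffix_decrease_Cons)
    qed
  qed
qed

abbreviation residual_matching :: "nat \<Rightarrow> nat \<Rightarrow> 'a set \<Rightarrow> 'e set \<Rightarrow> bool" where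
  "residual_matching d k U N \<equiv> k \<ge> 1 \<and> k \<le> d \<and> U \<subseteq> V \<and> card U \<le> (2*r - 1) * (k - 1) \<and>
     indep_matching (del_edges Ed ends U) ends indep \<gamma> N \<and> card N = d - k \<and>
     sp (\<gamma> ` N) = sp (\<gamma> ` del_edges Ed ends U)"

lemma residual_matching_if_saturated:
  assumes "valid_levels M xs" "imatch M" "card M < d"
    and saturated: "\<forall>g\<in>del_edges Ed ends (covered M xs). \<gamma> g \<in> sp (\<gamma> ` (M - blocked M xs))"
  shows "residual_matching d (d - card (M - blocked M xs)) (covered M xs) (M - blocked M xs)"
proof -
  let ?T = "blocked M xs" and ?U = "covered M xs" and ?N = "M - blocked M xs"
  have fin: "finite M" using imatch_finite assms(2) .
  have card_split: "card ?N + card ?T = card M"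
    using card_Diff_subset[OF finite_subset[OF blocked_subset fin] blocked_subset]
      card_mono[OF fin blocked_subset] by simp
  have "card ?U \<le> (2*r - 1) * card ?T" using card_covered_le assms(1,2) .
  also have "\<dots> \<le> (2*r - 1) * (d - card ?N - 1)"
    using card_split assms(3) by (intro mult_le_mono2) simp
  finally have card_U: "card ?U \<le> (2*r - 1) * (d - card ?N - 1)" .
  have N_del: "?N \<subseteq> del_edges Ed ends ?U"
    using imatch_subset_Ed[OF assms(2)] unblocked_avoids_covered[OF assms(2)]
    unfolding del_edges_def by blast
  have "imatch ?N" using imatch_subset[OF assms(2) Diff_subset] .
  then have matching: "indep_matching (del_edges Ed ends ?U) ends indep \<gamma> ?N"
    using N_del by (rule indep_matching_mono_edges)
  have "\<gamma> ` del_edges Ed ends ?U \<subseteq> E" using labels_in_E unfolding del_edges_def by blast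
  then have "\<gamma> ` ?N \<subseteq> sp (\<gamma> ` del_edges Ed ends ?U)" using subset_sp N_del by blast
  moreover have "\<gamma> ` del_edges Ed ends ?U \<subseteq> sp (\<gamma> ` ?N)" using saturated by blast
  ultimately have span: "sp (\<gamma> ` ?N) = sp (\<gamma> ` del_edges Ed ends ?U)" by (rule sp_eqI)
  have "?U \<subseteq> V" using covered_subset_V[OF assms(1) imatch_subset_Ed[OF assms(2)]] .
  then show ?thesis using card_split assms(3) card_U matching span by simp
qed

lemma length_le_card: "valid_levels M xs \<Longrightarrow> imatch M \<Longrightarrow> length xs \<le> card M"
  using length_le_card_blocked card_mono[OF imatch_finite blocked_subset] imatch_finite
  by (meson order_trans)

definition potential :: "nat \<Rightarrow> 'e set \<Rightarrow> 'e list \<Rightarrow> nat \<times> nat list" where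
  "potential d M xs = (d - card M, padded d (level_sizes M xs))"

abbreviation potential_less :: "(nat \<times> nat list) rel" where
  "potential_less \<equiv> less_than <*lex*> lex less_than"

lemma potential_less_push:
  assumes "valid_levels M xs" "imatch M" "card M < d"
  shows "(potential d M (x # xs), potential d M xs) \<in> potential_less"
proof -
  have "length xs < d" using length_le_card assms by fastforce
  moreover have "card (blockers M (blocked M xs) x) \<le> card M"
    using card_mono[OF imatch_finite[OF assms(2)]] blockers_subset by (meson Diff_subset order_trans)
  ultimately show ?thesis unfolding potential_def using padded_Cons_less assms(3) by simp
qed

lemma potential_less_augment:
  assumes "card M < d" "card M' = Suc (card M)"
  shows "(potential d M' xs', potential d M xs) \<in> potential_less"
proof -
  have "d - card M' < d - card M" using assms by linarith
  then show ?thesis unfolding potential_def by simp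
qed

lemma potential_less_improve:
  assumes "valid_levels M xs" "imatch M" "card M < d" "card M' = card M"
    and "suffix_decrease (level_sizes M' xs') (level_sizes M xs)"
  shows "(potential d M' xs', potential d M xs) \<in> potential_less"
proof -
  have "length (level_sizes M xs) \<le> d" using length_le_card assms(1-3) by fastforce
  then show ?thesis
    unfolding potential_def using assms(4) padded_less_if_suffix_decrease[OF assms(5)] by simp
qed

lemma matching_or_residual:
  assumes "valid_levels M xs" "imatch M" "card M < d"
  shows "(\<exists>M. imatch M \<and> card M = d) \<or> (\<exists>k U N. residual_matching d k U N)"
  using wf_lex_prod[OF wf_less_than wf_lex[OF wf_less_than]] assms
proof (induction "potential d M xs" arbitrary: M xs rule: wf_induct_rule)
  case less
  have IH: "(\<exists>M. imatch M \<and> card M = d) \<or> (\<exists>k U N. residual_matching d k U N)"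
    if "(potential d M' xs', potential d M xs) \<in> potential_less"
      "valid_levels M' xs'" "imatch M'" "card M' < d" for M' xs'
    using less.hyps that by blast
  let ?T = "blocked M xs" and ?U = "covered M xs"
  show ?case
  proof (cases "\<forall>g\<in>del_edges Ed ends ?U. \<gamma> g \<in> sp (\<gamma> ` (M - ?T))")
    case True
    then show ?thesis
      by (intro disjI2 exI) (rule residual_matching_if_saturated[OF less.prems True])
  next
    case False
    then obtain x where x: "x \<in> Ed" "ends x \<inter> ?U = {}" "\<gamma> x \<notin> sp (\<gamma> ` (M - ?T))"
      unfolding del_edges_def by blast
    show ?thesis
    proof (cases "blockers M ?T x = {}")
      case False
      then have "valid_levels M (x # xs)" using less.prems(1) x by simp
      then show ?thesis using IH potential_less_push less.prems by blast
    next
      case True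
      then have "\<forall>f\<in>M. ends f \<inter> ends x = {}"
        using avoids_matching_if_no_blockers x(2) by blast
      from augment_or_improve[OF less.prems(1,2) x(1) this x(2,3)]
      show ?thesis
      proof (elim disjE exE conjE)
        fix M' assume M': "imatch M'" "card M' = Suc (card M)"
        show ?thesis
        proof (cases "card M' = d")
          case True
          then show ?thesis using M' by blast
        next
          case False
          then show ?thesis
            using IH[OF potential_less_augment[OF less.prems(3) M'(2)], of "[]"] M' less.prems(3)
            by simp
        qed
      next
        fix M' xs' assume "imatch M'" "card M' = card M" "valid_levels M' xs'"
          "suffix_decrease (level_sizes M' xs') (level_sizes M xs)"
        then show ?thesis using IH potential_less_improve less.prems by metis
      qed
    qed
  qed
qed

end

theorem lemma2:
  fixes V :: "'a set" and Ed :: "'e set" and ends :: "'e \<Rightarrow> 'a set"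
    and E :: "'b set" and indep :: "'b set \<Rightarrow> bool" and \<gamma> :: "'e \<Rightarrow> 'b"
    and r d :: nat
  assumes "r \<ge> 1"
    and "hypergraph V Ed ends"
    and "\<forall>e\<in>Ed. card (ends e) \<le> r"
    and "matroid E indep"
    and "mrank indep E = d" and "d \<ge> 1"
    and "\<forall>e\<in>Ed. \<gamma> e \<in> E"
  shows "(\<exists>M. indep_matching Ed ends indep \<gamma> M \<and> card M = d) \<or>
    (\<exists>k U M. k \<ge> 1 \<and> k \<le> d \<and> U \<subseteq> V \<and> card U \<le> (2*r - 1) * (k - 1) \<and>
       indep_matching (del_edges Ed ends U) ends indep \<gamma> M \<and> card M = d - k \<and>
       span E indep (\<gamma> ` M) = span E indep (\<gamma> ` del_edges Ed ends U))"
proof -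
  interpret labelled_hypergraph E indep V Ed ends \<gamma> r
    by unfold_locales (use assms in auto)
  have "imatch {}" unfolding indep_matching_def using indep_empty by simp
  then show ?thesis using matching_or_residual[of "{}" "[]" d] assms(6) by simp
qed

end
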